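(* For any cardinality $\kappa$, $\Delta_{c_0^+(\kappa)}^{(c)}(R)=R$ for all $R\in[0,\infty)$.
   Context: For a cardinal $\kappa$, $c_0(\kappa)$ is the space of real families $(x_\xi)_{\xi<\kappa}$ such that $\{\xi: |x_\xi|>\eta\}$ is finite for every $\eta>0$, with the sup norm, and $c_0^+(\kappa)=\{x\in c_0(\kappa): x_\xi\geq0\ \forall\xi\}$ with the inherited metric. For a metric space $X$ and a cover $\mathcal{U}$ of $X$: $\mathrm{diam}(\mathcal{U})=\sup_{U\in\mathcal{U}}\mathrm{diam}(U)$; $\mathcal{L}(\mathcal{U})=\sup\{d\in[0,\infty): \text{every } E\subseteq X \text{ with } \mathrm{diam}(E)<d \text{ is contained in some } U\in\mathcal{U}\}$; $\mathcal{U}$ is point-finite if each point lies in only finitely many members. $\Delta_X^{(c)}(R)=\inf\{\mathrm{diam}(\mathcal{U}): \mathcal{U} \text{ a point-finite cover of } X,\ \mathcal{L}(\mathcal{U})\geq R\}$. *)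

theory Defs
  imports "HOL-Analysis.Analysis"
begin

text \<open>Generic notions for a metric space given by a carrier X and distance d.
Diameters take values in [0,\<infinity>] (type ennreal); the empty set has diameter 0.\<close>

definition set_diam :: "('a \<Rightarrow> 'a \<Rightarrow> real) \<Rightarrow> 'a set \<Rightarrow> ennreal" where
  "set_diam d E = (SUP p\<in>E \<times> E. ennreal (d (fst p) (snd p)))"

definition cover_diam :: "('a \<Rightarrow> 'a \<Rightarrow> real) \<Rightarrow> 'a set set \<Rightarrow> ennreal" where
  "cover_diam d \<U> = (SUP U\<in>\<U>. set_diam d U)"

definition lebesgue_num :: "'a set \<Rightarrow> ('a \<Rightarrow> 'a \<Rightarrow> real) \<Rightarrow> 'a set set \<Rightarrow> ennreal" where
  "lebesgue_num X d \<U> =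
     Sup {ennreal r | r. r \<ge> 0 \<and>
            (\<forall>E. E \<subseteq> X \<longrightarrow> set_diam d E < ennreal r \<longrightarrow> (\<exists>U\<in>\<U>. E \<subseteq> U))}"

definition is_cover :: "'a set \<Rightarrow> 'a set set \<Rightarrow> bool" where
  "is_cover X \<U> \<longleftrightarrow> (\<forall>U\<in>\<U>. U \<subseteq> X) \<and> \<Union>\<U> = X"

definition point_finite :: "'a set \<Rightarrow> 'a set set \<Rightarrow> bool" where
  "point_finite X \<U> \<longleftrightarrow> (\<forall>x\<in>X. finite {U\<in>\<U>. x \<in> U})"

text \<open>\<Delta>^(c)_X(R); the infimum of the empty set is \<infinity>.\<close>
definition Delta_c :: "'a set \<Rightarrow> ('a \<Rightarrow> 'a \<Rightarrow> real) \<Rightarrow> real \<Rightarrow> ennreal" where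
  "Delta_c X d R = Inf {cover_diam d \<U> | \<U>. is_cover X \<U> \<and> point_finite X \<U>
                                         \<and> lebesgue_num X d \<U> \<ge> ennreal R}"

text \<open>c_0^+(\<kappa>), with \<kappa> the cardinality of the index type 'k, and the sup metric.\<close>
definition c0_plus :: "('k \<Rightarrow> real) set" where
  "c0_plus = {x. (\<forall>\<xi>. x \<xi> \<ge> 0) \<and> (\<forall>\<eta>>0. finite {\<xi>. \<bar>x \<xi>\<bar> > \<eta>})}"

definition sup_dist :: "('k \<Rightarrow> real) \<Rightarrow> ('k \<Rightarrow> real) \<Rightarrow> real" where
  "sup_dist x y = (SUP \<xi>. \<bar>x \<xi> - y \<xi>\<bar>)"

end

theory Submission
  imports Defs
begin

text \<open>
  Lower bound: a cover with Lebesgue number at least \<open>R\<close> must swallow, for every \<open>t < R\<close>,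
  a pair of points of \<open>c\<^sub>0\<^sup>+(\<kappa>)\<close> at distance \<open>t\<close>, so one of its members has diameter \<open>\<ge> t\<close>.
  Upper bound: for \<open>a > 0\<close> the cubes \<open>\<Prod>\<^sub>\<xi> [f(\<xi>) a, f(\<xi>) a + R + a]\<close>, \<open>f : \<kappa> \<rightarrow> \<nat>\<close>, have diameter
  \<open>R + a\<close>; a set of diameter \<open>< R\<close> lies in the cube whose corner is the coordinatewise
  infimum rounded down to the grid \<open>a\<nat>\<close>. Such a cover is point-finite because of positivity:
  at the cofinitely many coordinates where \<open>x(\<xi>) \<le> a/2\<close> the only admissible value is \<open>f(\<xi>) = 0\<close>.
\<close>

lemma set_diam_le:
  assumes "\<And>x y. x \<in> E \<Longrightarrow> y \<in> E \<Longrightarrow> ennreal (d x y) \<le> c"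
  shows "set_diam d E \<le> c"
  unfolding set_diam_def using assms by (intro SUP_least) auto

lemma dist_le_set_diam:
  assumes "x \<in> E" "y \<in> E"
  shows "ennreal (d x y) \<le> set_diam d E"
  unfolding set_diam_def using assms by (intro SUP_upper2[of "(x, y)"]) auto

lemma set_diam_mono: "E \<subseteq> F \<Longrightarrow> set_diam d E \<le> set_diam d F"
  unfolding set_diam_def by (intro SUP_subset_mono) auto

lemma set_diam_le_cover_diam: "U \<in> \<U> \<Longrightarrow> set_diam d U \<le> cover_diam d \<U>"
  unfolding cover_diam_def by (rule SUP_upper)

lemma subset_member_if_set_diam_less_lebesgue_num:
  assumes "E \<subseteq> X" "set_diam d E < lebesgue_num X d \<U>"
  shows "\<exists>U\<in>\<U>. E \<subseteq> U"
  using assms unfolding lebesgue_num_def less_Sup_iff by auto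

lemma lebesgue_num_geI:
  assumes "R \<ge> 0"
    and "\<And>E. E \<subseteq> X \<Longrightarrow> set_diam d E < ennreal R \<Longrightarrow> \<exists>U\<in>\<U>. E \<subseteq> U"
  shows "ennreal R \<le> lebesgue_num X d \<U>"
  unfolding lebesgue_num_def using assms by (intro Sup_upper) auto

lemma Delta_c_le_cover_diam:
  assumes "is_cover X \<U>" "point_finite X \<U>" "ennreal R \<le> lebesgue_num X d \<U>"
  shows "Delta_c X d R \<le> cover_diam d \<U>"
  unfolding Delta_c_def using assms by (intro Inf_lower) blast

lemma Delta_c_ge:
  assumes sets: "\<And>y. y < ennreal R \<Longrightarrow> \<exists>E\<subseteq>X. y \<le> set_diam d E \<and> set_diam d E < ennreal R"
  shows "ennreal R \<le> Delta_c X d R"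
  unfolding Delta_c_def
proof (rule Inf_greatest, clarify)
  fix \<U> assume leb: "ennreal R \<le> lebesgue_num X d \<U>"
  show "ennreal R \<le> cover_diam d \<U>"
  proof (rule dense_le)
    fix y assume "y < ennreal R"
    then obtain E where E: "E \<subseteq> X" "y \<le> set_diam d E" "set_diam d E < ennreal R"
      using sets by blast
    then obtain U where U: "U \<in> \<U>" "E \<subseteq> U"
      using leb subset_member_if_set_diam_less_lebesgue_num by (metis order_less_le_trans)
    have "y \<le> set_diam d E" by (fact E(2))
    also have "\<dots> \<le> set_diam d U" using U(2) by (rule set_diam_mono)
    also have "\<dots> \<le> cover_diam d \<U>" using U(1) by (rule set_diam_le_cover_diam)
    finally show "y \<le> cover_diam d \<U>" .
  qed
qed

lemma c0_plus_nonneg: "x \<in> c0_plus \<Longrightarrow> 0 \<le> x \<xi>"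
  unfolding c0_plus_def by auto

lemma c0_plus_finite_gt: "x \<in> c0_plus \<Longrightarrow> \<eta> > 0 \<Longrightarrow> finite {\<xi>. x \<xi> > \<eta>}"
  unfolding c0_plus_def by auto

lemma c0_plus_bounded:
  assumes "x \<in> c0_plus"
  shows "\<exists>B. \<forall>\<xi>. x \<xi> \<le> B"
proof -
  define S where "S = {\<xi>. x \<xi> > 1}"
  have fin: "finite S" unfolding S_def using assms by (rule c0_plus_finite_gt) simp
  have "x \<xi> \<le> 1 + (\<Sum>\<zeta>\<in>S. x \<zeta>)" for \<xi>
  proof (cases "\<xi> \<in> S")
    case True
    then have "x \<xi> \<le> (\<Sum>\<zeta>\<in>S. x \<zeta>)"
      using fin c0_plus_nonneg[OF assms] by (intro member_le_sum) auto
    then show ?thesis by simp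
  next
    case False
    moreover have "0 \<le> (\<Sum>\<zeta>\<in>S. x \<zeta>)" using c0_plus_nonneg[OF assms] by (simp add: sum_nonneg)
    ultimately show ?thesis unfolding S_def by simp
  qed
  then show ?thesis by blast
qed

lemma sup_dist_le:
  assumes "\<And>\<xi>. \<bar>x \<xi> - y \<xi>\<bar> \<le> c"
  shows "sup_dist x y \<le> c"
  unfolding sup_dist_def using assms by (intro cSUP_least) auto

lemma abs_le_sup_dist:
  assumes "x \<in> c0_plus" "y \<in> c0_plus"
  shows "\<bar>x \<xi> - y \<xi>\<bar> \<le> sup_dist x y"
proof -
  obtain Bx By where "\<forall>\<xi>. x \<xi> \<le> Bx" "\<forall>\<xi>. y \<xi> \<le> By"
    using c0_plus_bounded assms by metis
  then have "\<bar>x \<zeta> - y \<zeta>\<bar> \<le> Bx + By" for \<zeta>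
    using c0_plus_nonneg[OF assms(1)] c0_plus_nonneg[OF assms(2)] by (smt (verit))
  then have "bdd_above (range (\<lambda>\<xi>. \<bar>x \<xi> - y \<xi>\<bar>))" by (intro bdd_aboveI) auto
  then show ?thesis unfolding sup_dist_def by (intro cSUP_upper) auto
qed

lemma coord_le_if_set_diam_less:
  assumes "E \<subseteq> c0_plus" "set_diam sup_dist E < ennreal R" "x \<in> E" "y \<in> E"
  shows "x \<xi> \<le> y \<xi> + R"
proof -
  have "ennreal (sup_dist x y) < ennreal R"
    using dist_le_set_diam[OF assms(3,4)] assms(2) by (rule le_less_trans)
  moreover have "\<bar>x \<xi> - y \<xi>\<bar> \<le> sup_dist x y" using assms by (intro abs_le_sup_dist) auto
  ultimately show ?thesis by (smt (verit) ennreal_less_iff)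
qed

lemma set_diam_pair_c0_plus:
  fixes \<xi>\<^sub>0 :: 'k and t :: real
  assumes "t \<ge> 0"
  defines "e \<equiv> \<lambda>\<xi>. if \<xi> = \<xi>\<^sub>0 then t else 0"
  shows "{\<lambda>_. 0, e} \<subseteq> c0_plus" and "set_diam sup_dist {\<lambda>_. 0, e} = ennreal t"
proof -
  have "{\<xi>. \<bar>e \<xi>\<bar> > \<eta>} \<subseteq> {\<xi>\<^sub>0}" if "\<eta> > 0" for \<eta> using that unfolding e_def by auto
  then have "finite {\<xi>. \<bar>e \<xi>\<bar> > \<eta>}" if "\<eta> > 0" for \<eta> using that finite_subset by blast
  with assms show sub: "{\<lambda>_. 0, e} \<subseteq> c0_plus" unfolding c0_plus_def e_def by auto
  have "sup_dist p q \<le> t" if "p \<in> {\<lambda>_. 0, e}" "q \<in> {\<lambda>_. 0, e}" for p q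
    using that assms by (intro sup_dist_le) (auto simp: e_def)
  then have "set_diam sup_dist {\<lambda>_. 0, e} \<le> ennreal t" by (intro set_diam_le ennreal_leI)
  moreover have "t \<le> sup_dist (\<lambda>_. 0) e"
    using abs_le_sup_dist[of "\<lambda>_. 0" e \<xi>\<^sub>0] sub assms by (simp add: e_def)
  then have "ennreal t \<le> set_diam sup_dist {\<lambda>_. 0, e}"
    by (meson dist_le_set_diam ennreal_leI insertCI order_trans)
  ultimately show "set_diam sup_dist {\<lambda>_. 0, e} = ennreal t" by (rule antisym)
qed

lemma Delta_c_c0_plus_ge:
  assumes "R \<ge> 0"
  shows "ennreal R \<le> Delta_c (c0_plus :: ('k \<Rightarrow> real) set) sup_dist R"
proof (rule Delta_c_ge)
  fix y assume "y < ennreal R"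
  then obtain t where t: "y = ennreal t" "0 \<le> t" "t < R"
    by (metis ennreal_cases ennreal_less_iff top.extremum_strict)
  define e :: "'k \<Rightarrow> real" where "e = (\<lambda>\<xi>. if \<xi> = undefined then t else 0)"
  note pair = set_diam_pair_c0_plus[OF t(2), of "undefined :: 'k", folded e_def]
  have "y \<le> set_diam sup_dist {\<lambda>_. 0, e}" "set_diam sup_dist {\<lambda>_. 0, e} < ennreal R"
    using pair(2) t by (simp_all add: ennreal_lessI)
  with pair(1) show "\<exists>E\<subseteq>(c0_plus :: ('k \<Rightarrow> real) set). y \<le> set_diam sup_dist E \<and> set_diam sup_dist E < ennreal R"
    by (intro exI[of _ "{\<lambda>_. 0, e}"]) simp
qed

lemma nat_floor_grid_bounds:
  fixes a s :: real
  assumes "a > 0" "s \<ge> 0"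
  shows "real (nat \<lfloor>s / a\<rfloor>) * a \<le> s" "s \<le> real (nat \<lfloor>s / a\<rfloor>) * a + a"
proof -
  have "real_of_int \<lfloor>s / a\<rfloor> * a \<le> s"
    using assms(1) of_int_floor_le pos_le_divide_eq by blast
  moreover have "s < (real_of_int \<lfloor>s / a\<rfloor> + 1) * a"
    using assms(1) real_of_int_floor_add_one_gt pos_divide_less_eq by blast
  moreover have "\<lfloor>s / a\<rfloor> \<ge> 0" using assms by simp
  ultimately show "real (nat \<lfloor>s / a\<rfloor>) * a \<le> s" "s \<le> real (nat \<lfloor>s / a\<rfloor>) * a + a"
    by (simp_all add: algebra_simps)
qed

definition grid_cube :: "real \<Rightarrow> real \<Rightarrow> ('k \<Rightarrow> nat) \<Rightarrow> ('k \<Rightarrow> real) set" where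
  "grid_cube a w f = {x \<in> c0_plus. \<forall>\<xi>. real (f \<xi>) * a \<le> x \<xi> \<and> x \<xi> \<le> real (f \<xi>) * a + w}"

lemma cover_diam_grid_cubes:
  "cover_diam sup_dist (range (grid_cube a w)) \<le> ennreal w"
  unfolding cover_diam_def
proof (intro SUP_least set_diam_le ennreal_leI sup_dist_le, clarify)
  fix f x y \<xi> assume "x \<in> grid_cube a w f" "y \<in> grid_cube a w f"
  then show "\<bar>x \<xi> - y \<xi>\<bar> \<le> w" unfolding grid_cube_def by (smt (verit) mem_Collect_eq)
qed

lemma subset_grid_cube_if_set_diam_less:
  assumes a: "a > 0" and E: "E \<subseteq> c0_plus" "set_diam sup_dist E < ennreal R"
  shows "\<exists>f. E \<subseteq> grid_cube a (R + a) f"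
proof (cases "E = {}")
  case False
  define s where "s \<xi> = Inf ((\<lambda>x. x \<xi>) ` E)" for \<xi>
  have bdd: "bdd_below ((\<lambda>x. x \<xi>) ` E)" for \<xi>
    using E(1) by (intro bdd_belowI[of _ 0]) (auto intro: c0_plus_nonneg)
  have s_le: "s \<xi> \<le> x \<xi>" if "x \<in> E" for x \<xi>
    unfolding s_def using that bdd by (intro cInf_lower) auto
  have le_s: "x \<xi> - R \<le> s \<xi>" if "x \<in> E" for x \<xi>
  proof -
    have "x \<xi> - R \<le> y \<xi>" if "y \<in> E" for y
      using coord_le_if_set_diam_less[OF E \<open>x \<in> E\<close> that, where \<xi> = \<xi>] by linarith
    then show ?thesis unfolding s_def using False by (intro cInf_greatest) auto
  qed
  have s_nonneg: "0 \<le> s \<xi>" for \<xi>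
    unfolding s_def using False E(1) by (intro cInf_greatest) (auto intro: c0_plus_nonneg)
  have "x \<in> grid_cube a (R + a) (\<lambda>\<xi>. nat \<lfloor>s \<xi> / a\<rfloor>)" if x: "x \<in> E" for x
    unfolding grid_cube_def mem_Collect_eq
  proof (intro conjI allI)
    show "x \<in> c0_plus" using E(1) x by blast
    fix \<xi>
    show "real (nat \<lfloor>s \<xi> / a\<rfloor>) * a \<le> x \<xi>" "x \<xi> \<le> real (nat \<lfloor>s \<xi> / a\<rfloor>) * a + (R + a)"
      using nat_floor_grid_bounds[OF a s_nonneg[of \<xi>]] s_le[OF x, of \<xi>] le_s[OF x, of \<xi>]
      by linarith+
  qed
  then show ?thesis by blast
qed simp

lemma lebesgue_num_grid_cubes:
  assumes "R \<ge> 0" "a > 0"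
  shows "ennreal R \<le> lebesgue_num c0_plus sup_dist (range (grid_cube a (R + a)))"
proof (rule lebesgue_num_geI[OF assms(1)])
  fix E assume "E \<subseteq> c0_plus" "set_diam sup_dist E < ennreal R"
  then obtain f where "E \<subseteq> grid_cube a (R + a) f"
    using subset_grid_cube_if_set_diam_less[OF assms(2)] by blast
  then show "\<exists>U\<in>range (grid_cube a (R + a)). E \<subseteq> U" by blast
qed

lemma is_cover_grid_cubes:
  assumes "a > 0" "w \<ge> a"
  shows "is_cover c0_plus (range (grid_cube a w))"
  unfolding is_cover_def
proof (intro conjI subset_antisym subsetI)
  fix x :: "'k \<Rightarrow> real" assume x: "x \<in> c0_plus"
  have "x \<in> grid_cube a w (\<lambda>\<xi>. nat \<lfloor>x \<xi> / a\<rfloor>)"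
    unfolding grid_cube_def using x assms nat_floor_grid_bounds[OF assms(1) c0_plus_nonneg[OF x]]
    by (smt (verit) mem_Collect_eq)
  then show "x \<in> \<Union> (range (grid_cube a w))" by blast
qed (auto simp: grid_cube_def)

lemma point_finite_grid_cubes:
  assumes a: "a > 0"
  shows "point_finite c0_plus (range (grid_cube a w))"
  unfolding point_finite_def
proof
  fix x :: "'k \<Rightarrow> real" assume x: "x \<in> c0_plus"
  obtain B where B: "\<forall>\<xi>. x \<xi> \<le> B" using c0_plus_bounded[OF x] by blast
  define S where "S = {\<xi>. x \<xi> > a / 2}"
  have "finite S" unfolding S_def using x a by (intro c0_plus_finite_gt) auto
  define F where "F = {f. \<forall>\<xi>. (\<xi> \<in> S \<longrightarrow> f \<xi> \<in> {..nat \<lceil>B / a\<rceil>}) \<and> (\<xi> \<notin> S \<longrightarrow> f \<xi> = 0)}"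
  have "finite F" unfolding F_def using \<open>finite S\<close> by (intro finite_set_of_finite_funs) auto
  have "f \<in> F" if "x \<in> grid_cube a w f" for f
  proof -
    have lower: "real (f \<xi>) * a \<le> x \<xi>" for \<xi> using that unfolding grid_cube_def by auto
    have "f \<xi> \<le> nat \<lceil>B / a\<rceil>" for \<xi>
    proof -
      have "real (f \<xi>) * a \<le> B" using lower[of \<xi>] B by (meson order_trans)
      then have "real (f \<xi>) \<le> B / a" using a by (simp add: pos_le_divide_eq)
      then show ?thesis by linarith
    qed
    moreover have "f \<xi> = 0" if "\<xi> \<notin> S" for \<xi>
    proof -
      have "x \<xi> \<le> a / 2" using that unfolding S_def by simp
      then have "real (f \<xi>) * a < 1 * a" using lower[of \<xi>] a by linarith
      then show ?thesis using a by (simp only: mult_less_cancel_right_pos)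
    qed
    ultimately show ?thesis unfolding F_def by auto
  qed
  then have "{U \<in> range (grid_cube a w). x \<in> U} \<subseteq> grid_cube a w ` F" by blast
  with \<open>finite F\<close> show "finite {U \<in> range (grid_cube a w). x \<in> U}"
    by (meson finite_imageI finite_subset)
qed

lemma Delta_c_c0_plus_le:
  assumes "R \<ge> 0" "a > 0"
  shows "Delta_c (c0_plus :: ('k \<Rightarrow> real) set) sup_dist R \<le> ennreal (R + a)"
proof -
  have "Delta_c (c0_plus :: ('k \<Rightarrow> real) set) sup_dist R
          \<le> cover_diam sup_dist (range (grid_cube a (R + a) :: ('k \<Rightarrow> nat) \<Rightarrow> _))"
    using assms by (intro Delta_c_le_cover_diam is_cover_grid_cubes point_finite_grid_cubes
        lebesgue_num_grid_cubes) auto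
  also have "\<dots> \<le> ennreal (R + a)" by (rule cover_diam_grid_cubes)
  finally show ?thesis .
qed

theorem proposition3p10:
  fixes R :: real
  assumes "R \<ge> 0"
  shows "Delta_c (c0_plus :: ('k \<Rightarrow> real) set) sup_dist R = ennreal R"
proof (rule antisym)
  show "Delta_c (c0_plus :: ('k \<Rightarrow> real) set) sup_dist R \<le> ennreal R"
  proof (rule ennreal_le_epsilon)
    fix e :: real assume "0 < e"
    then show "Delta_c (c0_plus :: ('k \<Rightarrow> real) set) sup_dist R \<le> ennreal R + ennreal e"
      using Delta_c_c0_plus_le[OF assms] assms by (simp add: ennreal_plus)
  qed
  show "ennreal R \<le> Delta_c (c0_plus :: ('k \<Rightarrow> real) set) sup_dist R"
    using assms by (rule Delta_c_c0_plus_ge)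
qed

end
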